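(* Let $c\ge1$ and let $\Gamma$ be a $c$-uniform unoriented hypergraph with $N$ vertices, $M\ge1$ edges and no isolated vertices, with average degree $\overline{\deg}$, smallest edge Laplacian eigenvalue $\mu_1<c/\overline{\deg}$, and strong edge coloring number $\chi'$, and suppose $\chi'=\dfrac{c-\mu_1}{c/\overline{\deg}-\mu_1}$. (1) If $\mu_1=0$, then $\Gamma$ is $k$-regular for some $k$ (namely $k=\overline{\deg}$), $\chi'=k$, and $0$ is an eigenvalue of $L^1$ with multiplicity at least $k-1$. (2) If $\mu_1>0$, then $\mu_1$ is an eigenvalue of $L^1$ with multiplicity at least $\chi'-1$, and also an eigenvalue of the normalized Laplacian $L$ with multiplicity at least $\chi'-1$.
   Context: A hypergraph has finite vertex set $V$ and edge set $E\subseteq\mathcal P(V)$; it is $c$-uniform if $|e|=c$ for all $e$, and unoriented means all incidences have orientation $+1$, so the incidence matrix $\mathcal I$ ($N\times M$) has $\mathcal I_{v,e}=1$ if $v\in e$ and $0$ otherwise. $\deg v=|\{e: v\in e\}|\ge1$, $D=\mathrm{diag}(\deg v)$, $\overline{\deg}=\frac1N\sum_v\deg v$; $\Gamma$ is $k$-regular if every vertex has degree $k$. The normalized Laplacian is $L=D^{-1}\mathcal I\mathcal I^\top$ ($N\times N$) and the edge Laplacian is $L^1=\mathcal I^\top D^{-1}\mathcal I$ ($M\times M$), with eigenvalues $0\le\mu_1\le\dots\le\mu_M$. A proper strong $k$-edge-coloring is a map $c'\colon E\to\{1,\dots,k\}$ such that distinct edges of the same color are disjoint; $\chi'$ is the least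 such $k$. *)

theory Defs
  imports Complex_Main "HOL-Library.Function_Algebras"
begin

text \<open>Hypergraphs: a finite vertex set V and an edge set E, a set of subsets of V.
  Matrices indexed by a finite set S are functions S => S => real; vectors are
  functions S => real vanishing outside S.\<close>

definition hypergraph :: "'v set \<Rightarrow> 'v set set \<Rightarrow> bool" where
  "hypergraph V E \<longleftrightarrow> finite V \<and> E \<subseteq> Pow V"

definition uniform :: "nat \<Rightarrow> 'v set set \<Rightarrow> bool" where
  "uniform c E \<longleftrightarrow> (\<forall>e\<in>E. card e = c)"

definition incidence :: "'v \<Rightarrow> 'v set \<Rightarrow> real" where
  "incidence v e = (if v \<in> e then 1 else 0)"

definition hdeg :: "'v set set \<Rightarrow> 'v \<Rightarrow> nat" where
  "hdeg E v = card {e \<in> E. v \<in> e}"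

definition avg_deg :: "'v set \<Rightarrow> 'v set set \<Rightarrow> real" where
  "avg_deg V E = (\<Sum>v\<in>V. real (hdeg E v)) / real (card V)"

definition regular :: "'v set \<Rightarrow> 'v set set \<Rightarrow> nat \<Rightarrow> bool" where
  "regular V E k \<longleftrightarrow> (\<forall>v\<in>V. hdeg E v = k)"

text \<open>Normalized Laplacian L = D^{-1} I I^T (N x N).\<close>
definition norm_laplacian :: "'v set \<Rightarrow> 'v set set \<Rightarrow> 'v \<Rightarrow> 'v \<Rightarrow> real" where
  "norm_laplacian V E v w =
     (\<Sum>e\<in>E. incidence v e * incidence w e) / real (hdeg E v)"

text \<open>Edge Laplacian L^1 = I^T D^{-1} I (M x M).\<close>
definition edge_laplacian :: "'v set \<Rightarrow> 'v set set \<Rightarrow> 'v set \<Rightarrow> 'v set \<Rightarrow> real" where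
  "edge_laplacian V E e f =
     (\<Sum>v\<in>V. incidence v e * incidence v f / real (hdeg E v))"

definition eigenspace :: "'a set \<Rightarrow> ('a \<Rightarrow> 'a \<Rightarrow> real) \<Rightarrow> real \<Rightarrow> ('a \<Rightarrow> real) set" where
  "eigenspace S A mu =
     {x. (\<forall>i. i \<notin> S \<longrightarrow> x i = 0) \<and> (\<forall>i\<in>S. (\<Sum>j\<in>S. A i j * x j) = mu * x i)}"

definition is_eigenvalue :: "'a set \<Rightarrow> ('a \<Rightarrow> 'a \<Rightarrow> real) \<Rightarrow> real \<Rightarrow> bool" where
  "is_eigenvalue S A mu \<longleftrightarrow> (\<exists>x\<in>eigenspace S A mu. x \<noteq> (\<lambda>_. 0))"

text \<open>Multiplicity = dimension of the eigenspace (geometric multiplicity; the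
  matrices considered are diagonalizable, so this equals the algebraic one).\<close>
definition eig_mult :: "'a set \<Rightarrow> ('a \<Rightarrow> 'a \<Rightarrow> real) \<Rightarrow> real \<Rightarrow> nat" where
  "eig_mult S A mu = vector_space.dim (\<lambda>r (x::'a \<Rightarrow> real) i. r * x i) (eigenspace S A mu)"

definition mu1 :: "'v set \<Rightarrow> 'v set set \<Rightarrow> real" where
  "mu1 V E = Min {mu. is_eigenvalue E (edge_laplacian V E) mu}"

definition proper_strong_coloring :: "'v set set \<Rightarrow> nat \<Rightarrow> ('v set \<Rightarrow> nat) \<Rightarrow> bool" where
  "proper_strong_coloring E k col \<longleftrightarrow>
     (\<forall>e\<in>E. col e \<in> {1..k}) \<and>
     (\<forall>e\<in>E. \<forall>f\<in>E. e \<noteq> f \<and> col e = col f \<longrightarrow> e \<inter> f = {})"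

definition strong_chromatic_index :: "'v set set \<Rightarrow> nat" where
  "strong_chromatic_index E = (LEAST k. \<exists>col. proper_strong_coloring E k col)"

end

theory Submission
  imports Defs "HOL-Analysis.Analysis"
begin

text \<open>
  Take an optimal strong colouring with \<open>\<chi>'\<close> colours and let \<open>x\<^sub>i\<close> be the indicator vector
  of the \<open>i\<close>-th colour class minus its mean \<open>m\<^sub>i/M\<close>. Because a vertex lies in at most one
  edge of each colour, the quadratic forms of \<open>L\<^sup>1\<close> at the \<open>x\<^sub>i\<close> can be summed in closed form:
  \<open>\<Sum>\<^sub>i (\<langle>L\<^sup>1x\<^sub>i,x\<^sub>i\<rangle> - \<mu>\<^sub>1|x\<^sub>i|\<^sup>2) = (N - \<mu>\<^sub>1M) - (c - \<mu>\<^sub>1) Q/M\<close> with \<open>Q = \<Sum>\<^sub>i m\<^sub>i\<^sup>2\<close>.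
  Every summand is nonnegative by the variational characterisation of \<open>\<mu>\<^sub>1\<close>, and
  \<open>Q \<ge> M\<^sup>2/\<chi>'\<close>; together these give \<open>\<chi>' \<ge> (c - \<mu>\<^sub>1)/(c/deg - \<mu>\<^sub>1)\<close>. When equality holds, all
  colour classes have size \<open>M/\<chi>'\<close> and every \<open>x\<^sub>i\<close> is a \<open>\<mu>\<^sub>1\<close>-eigenvector, so the \<open>\<chi>' - 1\<close>
  differences \<open>x\<^sub>i - x\<^sub>\<chi>\<^sub>'\<close> span a space of that dimension inside the eigenspace. If \<open>\<mu>\<^sub>1 = 0\<close>,
  \<open>x\<^sub>1 \<in> ker L\<^sup>1\<close> forces every vertex degree to be \<open>\<chi>'\<close>; if \<open>\<mu>\<^sub>1 > 0\<close>, the map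
  \<open>y \<mapsto> D\<^sup>-\<^sup>1I y\<close> embeds the \<open>\<mu>\<^sub>1\<close>-eigenspace of \<open>L\<^sup>1 = I\<^sup>TD\<^sup>-\<^sup>1I\<close> into that of \<open>L = D\<^sup>-\<^sup>1II\<^sup>T\<close>.
\<close>

(* The scalar multiplication in terms of which eig_mult measures dimension. *)
interpretation fun_space: vector_space "\<lambda>r (x::'a \<Rightarrow> real) i. r * x i"
  by unfold_locales (auto simp: fun_eq_iff algebra_simps)

interpretation fun_space_pair:
  vector_space_pair "\<lambda>r (x::'a \<Rightarrow> real) i. r * x i" "\<lambda>r (x::'b \<Rightarrow> real) i. r * x i" ..

lemma sum_fun_apply: "(\<Sum>x\<in>A. f x) i = (\<Sum>x\<in>A. f x i)"
  by (induction A rule: infinite_finite_induct) auto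

lemma linear_plus_quadratic_nonneg_imp_zero:
  fixes a b :: real
  assumes "\<And>t. 0 \<le> a * t + b * t\<^sup>2"
  shows "a = 0"
proof (rule ccontr)
  assume "a \<noteq> 0"
  define d where "d = \<bar>b\<bar> + 1"
  have "0 < d" by (simp add: d_def)
  define t where "t = - a / d"
  have "0 < t\<^sup>2" using \<open>a \<noteq> 0\<close> \<open>0 < d\<close> by (simp add: t_def)
  have "b * t\<^sup>2 \<le> \<bar>b\<bar> * t\<^sup>2" by (simp add: mult_right_mono)
  also have "\<dots> < d * t\<^sup>2" using \<open>0 < t\<^sup>2\<close> by (simp add: d_def distrib_right)
  also have "\<dots> = - (a * t)" using \<open>0 < d\<close> by (simp add: t_def power2_eq_square field_simps)
  finally show False using assms[of t] by linarith
qed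

lemma sum_squared_deviation:
  fixes f :: "'a \<Rightarrow> real"
  assumes "finite I"
  shows "(\<Sum>i\<in>I. (f i - sum f I / card I)\<^sup>2) = (\<Sum>i\<in>I. (f i)\<^sup>2) - (sum f I)\<^sup>2 / card I"
proof (cases "I = {}")
  case False
  define a where "a = sum f I / card I"
  have "(\<Sum>i\<in>I. (f i - a)\<^sup>2) = (\<Sum>i\<in>I. (f i)\<^sup>2 - 2 * a * f i + a\<^sup>2)"
    by (intro sum.cong refl) (simp add: power2_eq_square algebra_simps)
  also have "\<dots> = (\<Sum>i\<in>I. (f i)\<^sup>2) - 2 * a * sum f I + card I * a\<^sup>2"
    by (simp add: sum.distrib sum_subtractf sum_distrib_left)
  also have "\<dots> = (\<Sum>i\<in>I. (f i)\<^sup>2) - (sum f I)\<^sup>2 / card I"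
    using False assms unfolding a_def by (simp add: power2_eq_square field_simps)
  finally show ?thesis unfolding a_def .
qed simp

section \<open>Symmetric matrices acting on finitely supported vectors\<close>

definition supported_on :: "'a set \<Rightarrow> ('a \<Rightarrow> real) \<Rightarrow> bool" where
  "supported_on S x \<longleftrightarrow> (\<forall>i. i \<notin> S \<longrightarrow> x i = 0)"

definition dot :: "'a set \<Rightarrow> ('a \<Rightarrow> real) \<Rightarrow> ('a \<Rightarrow> real) \<Rightarrow> real" where
  "dot S x y = (\<Sum>i\<in>S. x i * y i)"

definition bilinear_form :: "'a set \<Rightarrow> ('a \<Rightarrow> 'a \<Rightarrow> real) \<Rightarrow> ('a \<Rightarrow> real) \<Rightarrow> ('a \<Rightarrow> real) \<Rightarrow> real" where
  "bilinear_form S A x y = (\<Sum>i\<in>S. \<Sum>j\<in>S. x i * A i j * y j)"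

definition symmetric_on :: "'a set \<Rightarrow> ('a \<Rightarrow> 'a \<Rightarrow> real) \<Rightarrow> bool" where
  "symmetric_on S A \<longleftrightarrow> (\<forall>i\<in>S. \<forall>j\<in>S. A i j = A j i)"

definition rayleigh_lower_bound :: "'a set \<Rightarrow> ('a \<Rightarrow> 'a \<Rightarrow> real) \<Rightarrow> real \<Rightarrow> bool" where
  "rayleigh_lower_bound S A \<mu> \<longleftrightarrow>
     (\<forall>y. supported_on S y \<longrightarrow> \<mu> * dot S y y \<le> bilinear_form S A y y)"

lemma eigenspace_supported: "x \<in> eigenspace S A \<mu> \<Longrightarrow> supported_on S x"
  unfolding eigenspace_def supported_on_def by auto

lemma subspace_eigenspace: "fun_space.subspace (eigenspace S A \<mu>)"
  unfolding fun_space.subspace_def eigenspace_def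
  by (auto simp: sum.distrib algebra_simps simp flip: sum_distrib_left)

lemma dot_commute: "dot S x y = dot S y x"
  unfolding dot_def by (simp add: mult.commute)

lemma dot_self_nonneg: "0 \<le> dot S x x"
  unfolding dot_def by (simp add: sum_nonneg)

lemma supported_dot_self_eq_0:
  assumes "finite S" "supported_on S x"
  shows "dot S x x = 0 \<longleftrightarrow> x = (\<lambda>_. 0)"
  using assms unfolding dot_def supported_on_def
  by (auto simp: sum_nonneg_eq_0_iff fun_eq_iff)

lemma bilinear_form_commute:
  assumes "symmetric_on S A"
  shows "bilinear_form S A x y = bilinear_form S A y x"
proof -
  have "bilinear_form S A x y = (\<Sum>j\<in>S. \<Sum>i\<in>S. x i * A i j * y j)"
    unfolding bilinear_form_def by (rule sum.swap)
  also have "\<dots> = bilinear_form S A y x"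
    using assms unfolding bilinear_form_def symmetric_on_def
    by (intro sum.cong refl) (simp add: mult_ac)
  finally show ?thesis .
qed

lemma bilinear_form_eigenvector:
  assumes "x \<in> eigenspace S A \<mu>"
  shows "bilinear_form S A y x = \<mu> * dot S y x"
proof -
  have "bilinear_form S A y x = (\<Sum>i\<in>S. y i * (\<Sum>j\<in>S. A i j * x j))"
    unfolding bilinear_form_def by (simp add: sum_distrib_left mult.assoc)
  also have "\<dots> = (\<Sum>i\<in>S. y i * (\<mu> * x i))"
    using assms unfolding eigenspace_def by (intro sum.cong refl) auto
  finally show ?thesis
    unfolding dot_def by (simp add: sum_distrib_left mult_ac)
qed

lemma eigenvectors_orthogonal:
  assumes "symmetric_on S A" "x \<in> eigenspace S A \<mu>" "y \<in> eigenspace S A \<nu>" "\<mu> \<noteq> \<nu>"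
  shows "dot S x y = 0"
proof -
  have "\<mu> * dot S x y = \<nu> * dot S x y"
    using bilinear_form_eigenvector[OF assms(2), of y] bilinear_form_eigenvector[OF assms(3), of x]
      bilinear_form_commute[OF assms(1), of x y] dot_commute[of S x y] by simp
  then show ?thesis using assms(4) by simp
qed

lemma eigenvector_if_rayleigh_equality:
  assumes fin: "finite S" and sym: "symmetric_on S A" and bound: "rayleigh_lower_bound S A \<mu>"
    and x: "supported_on S x" and eq: "bilinear_form S A x x = \<mu> * dot S x x"
  shows "x \<in> eigenspace S A \<mu>"
proof -
  \<comment> \<open>\<open>b\<close> is positive semidefinite with \<open>b x x = 0\<close>, so \<open>b x\<close> vanishes; testing it against
      the residual \<open>r = A x - \<mu> x\<close> gives \<open>dot S r r = 0\<close>.\<close>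
  define b where "b y z = bilinear_form S A y z - \<mu> * dot S y z" for y z
  define r where "r i = (if i \<in> S then (\<Sum>j\<in>S. A i j * x j) - \<mu> * x i else 0)" for i
  have r: "supported_on S r" unfolding supported_on_def r_def by simp
  have b_sym: "b y z = b z y" for y z
    unfolding b_def using bilinear_form_commute[OF sym] dot_commute by metis
  have "b r x = (\<Sum>i\<in>S. r i * ((\<Sum>j\<in>S. A i j * x j) - \<mu> * x i))"
    unfolding b_def bilinear_form_def dot_def
    by (simp add: sum_subtractf[symmetric] sum_distrib_left right_diff_distrib mult_ac)
  also have "\<dots> = dot S r r"
    unfolding dot_def r_def by (intro sum.cong) auto
  finally have "b r x = dot S r r" .
  have "0 \<le> 2 * b r x * t + b r r * t\<^sup>2" for t
  proof -
    have "supported_on S (\<lambda>i. x i + t * r i)" using x r unfolding supported_on_def by simp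
    then have "0 \<le> b (\<lambda>i. x i + t * r i) (\<lambda>i. x i + t * r i)"
      using bound unfolding rayleigh_lower_bound_def b_def by simp
    also have "\<dots> = b x x + t * (b x r + b r x) + t\<^sup>2 * b r r"
      unfolding b_def bilinear_form_def dot_def
      by (simp add: algebra_simps sum.distrib sum_subtractf sum_distrib_left power2_eq_square)
    finally show ?thesis using eq b_sym[of x r] unfolding b_def by (simp add: algebra_simps)
  qed
  then have "2 * b r x = 0" by (rule linear_plus_quadratic_nonneg_imp_zero)
  then have r0: "r i = 0" for i
    using supported_dot_self_eq_0[OF fin r] \<open>b r x = dot S r r\<close> by (simp add: fun_eq_iff)
  show ?thesis unfolding eigenspace_def
  proof (intro CollectI conjI allI impI ballI)
    fix i assume "i \<notin> S"
    then show "x i = 0" using x unfolding supported_on_def by simp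
  next
    fix i assume "i \<in> S"
    then show "(\<Sum>j\<in>S. A i j * x j) = \<mu> * x i" using r0[of i] unfolding r_def by simp
  qed
qed

section \<open>The smallest eigenvalue as a minimum of the Rayleigh quotient\<close>

lemma continuous_on_bilinear_form_diag: "continuous_on UNIV (\<lambda>x. bilinear_form S A x x)"
  unfolding bilinear_form_def by (intro continuous_intros continuous_on_product_coordinates)

lemma compact_supported_unit_sphere:
  assumes "finite S"
  shows "compact {x. supported_on S x \<and> dot S x x = 1}"
proof -
  define K :: "('a \<Rightarrow> real) set" where
    "K = PiE UNIV (\<lambda>i. if i \<in> S then {-1..1} else {0})"
  have "compactin (product_topology (\<lambda>_. euclidean) UNIV) K"
    unfolding K_def compactin_PiE by auto
  then have "compact K" by (simp add: euclidean_product_topology)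
  moreover have "closed {x. dot S x x = 1}"
    unfolding dot_def
    by (intro closed_Collect_eq continuous_intros continuous_on_product_coordinates)
  moreover have "{x. supported_on S x \<and> dot S x x = 1} = K \<inter> {x. dot S x x = 1}"
  proof (intro set_eqI iffI)
    fix x assume x: "x \<in> {x. supported_on S x \<and> dot S x x = 1}"
    have "\<bar>x i\<bar> \<le> 1" if "i \<in> S" for i
    proof -
      have "(x i)\<^sup>2 \<le> dot S x x"
        unfolding dot_def power2_eq_square using assms that by (intro member_le_sum) auto
      then show ?thesis using x by (simp add: abs_square_le_1)
    qed
    then show "x \<in> K \<inter> {x. dot S x x = 1}"
      using x unfolding K_def supported_on_def by (auto simp: abs_le_iff)
  next
    fix x assume x: "x \<in> K \<inter> {x. dot S x x = 1}"
    then have "x i \<in> (if i \<in> S then {-1..1} else {0})" for i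
      unfolding K_def by (blast intro: PiE_mem)
    then have "x i = 0" if "i \<notin> S" for i using that by (metis singletonD)
    then show "x \<in> {x. supported_on S x \<and> dot S x x = 1}"
      using x unfolding supported_on_def by simp
  qed
  ultimately show ?thesis by (simp add: compact_Int_closed)
qed

lemma exists_rayleigh_minimizer:
  assumes fin: "finite S" and ne: "S \<noteq> {}" and sym: "symmetric_on S A"
  obtains \<mu> x where "x \<in> eigenspace S A \<mu>" "x \<noteq> (\<lambda>_. 0)" "rayleigh_lower_bound S A \<mu>"
proof -
  let ?X = "{x. supported_on S x \<and> dot S x x = 1}"
  obtain i0 where "i0 \<in> S" using ne by auto
  then have "(\<lambda>i. if i = i0 then 1 else 0) \<in> ?X"
    using fin by (simp add: supported_on_def dot_def if_distrib cong: if_cong)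
  then obtain x where x: "x \<in> ?X" and min: "\<forall>y\<in>?X. bilinear_form S A x x \<le> bilinear_form S A y y"
    using continuous_attains_inf[OF compact_supported_unit_sphere[OF fin] _
        continuous_on_subset[OF continuous_on_bilinear_form_diag]] by blast
  define \<mu> where "\<mu> = bilinear_form S A x x"
  have bound: "rayleigh_lower_bound S A \<mu>"
    unfolding rayleigh_lower_bound_def
  proof (intro allI impI)
    fix y assume y: "supported_on S y"
    show "\<mu> * dot S y y \<le> bilinear_form S A y y"
    proof (cases "dot S y y = 0")
      case True
      then have "y = (\<lambda>_. 0)" using supported_dot_self_eq_0[OF fin y] by simp
      then show ?thesis using True by (simp add: bilinear_form_def)
    next
      case False
      then have pos: "0 < dot S y y" using dot_self_nonneg[of S y] by linarith
      define s where "s = sqrt (dot S y y)"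
      have "0 < s" "s\<^sup>2 = dot S y y" using pos by (simp_all add: s_def)
      have "(\<lambda>i. y i / s) \<in> ?X"
        using y pos \<open>s\<^sup>2 = dot S y y\<close> unfolding supported_on_def dot_def
        by (simp add: sum_divide_distrib[symmetric] power2_eq_square)
      then have "\<mu> \<le> bilinear_form S A (\<lambda>i. y i / s) (\<lambda>i. y i / s)"
        using min unfolding \<mu>_def by blast
      also have "\<dots> = bilinear_form S A y y / dot S y y"
        unfolding bilinear_form_def \<open>s\<^sup>2 = dot S y y\<close>[symmetric]
        by (simp add: sum_divide_distrib power2_eq_square)
      finally show ?thesis using pos by (simp add: field_simps)
    qed
  qed
  have "x \<in> eigenspace S A \<mu>"
    using eigenvector_if_rayleigh_equality[OF fin sym bound] x unfolding \<mu>_def by simp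
  moreover have "x \<noteq> (\<lambda>_. 0)" using x by (auto simp: dot_def)
  ultimately show thesis using bound that by blast
qed

section \<open>Counting eigenvalues and their multiplicities\<close>

lemma supported_in_span_unit_vectors:
  assumes "finite S" "supported_on S x"
  shows "x \<in> fun_space.span ((\<lambda>i j. if j = i then 1 else 0) ` S)"
proof -
  have "x = (\<Sum>i\<in>S. (\<lambda>j. x i * (if j = i then 1 else 0)))"
  proof
    fix j
    have "(\<Sum>i\<in>S. x i * (if j = i then 1 else 0)) = (\<Sum>i\<in>S. if j = i then x i else 0)"
      by (intro sum.cong) auto
    then show "x j = (\<Sum>i\<in>S. (\<lambda>j. x i * (if j = i then 1 else 0))) j"
      using assms unfolding sum_fun_apply supported_on_def by (simp add: sum.delta)
  qed
  also have "\<dots> \<in> fun_space.span ((\<lambda>i j. if j = i then 1 else 0) ` S)"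
    by (intro fun_space.span_sum fun_space.span_scale fun_space.span_base) auto
  finally show ?thesis .
qed

lemma independent_supported_bound:
  assumes "finite S" "fun_space.independent T" "\<forall>x\<in>T. supported_on S x"
  shows "finite T" and "card T \<le> card S"
proof -
  let ?U = "(\<lambda>i j. if j = i then 1 else 0 :: real) ` S"
  have "T \<subseteq> fun_space.span ?U"
    using supported_in_span_unit_vectors[OF assms(1)] assms(3) by blast
  then have "finite T \<and> card T \<le> card ?U"
    using assms(1,2) by (intro fun_space.independent_span_bound) simp_all
  then show "finite T" "card T \<le> card S"
    using card_image_le[OF assms(1), of "\<lambda>i j. if j = i then 1 else 0 :: real"] by auto
qed

lemma independent_if_orthogonal:
  assumes fin: "finite S" and T: "\<forall>x\<in>T. supported_on S x \<and> x \<noteq> (\<lambda>_. 0)"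
    and orth: "pairwise (\<lambda>x y. dot S x y = 0) T"
  shows "fun_space.independent T"
  unfolding fun_space.independent_explicit_finite_subsets
proof (intro allI impI ballI)
  fix t u v
  assume t: "t \<subseteq> T" "finite t" and comb: "(\<Sum>w\<in>t. (\<lambda>i. u w * w i)) = 0" and v: "v \<in> t"
  have "(\<Sum>w\<in>t. u w * w i) = 0" for i
    using fun_cong[OF comb, of i] by (simp add: sum_fun_apply)
  then have "0 = (\<Sum>i\<in>S. v i * (\<Sum>w\<in>t. u w * w i))" by simp
  also have "\<dots> = (\<Sum>i\<in>S. \<Sum>w\<in>t. u w * (v i * w i))"
    by (simp add: sum_distrib_left mult_ac)
  also have "\<dots> = (\<Sum>w\<in>t. \<Sum>i\<in>S. u w * (v i * w i))"
    by (rule sum.swap)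
  also have "\<dots> = (\<Sum>w\<in>t. u w * dot S v w)"
    by (simp add: dot_def sum_distrib_left)
  also have "\<dots> = u v * dot S v v + (\<Sum>w\<in>t - {v}. u w * dot S v w)"
    using t v by (simp add: sum.remove)
  also have "(\<Sum>w\<in>t - {v}. u w * dot S v w) = 0"
  proof (intro sum.neutral ballI)
    fix w assume "w \<in> t - {v}"
    then have "dot S v w = 0" using t v by (intro pairwiseD[OF orth]) auto
    then show "u w * dot S v w = 0" by simp
  qed
  finally have "u v * dot S v v = 0" by simp
  moreover have "v \<in> T" using t v by blast
  then have "dot S v v \<noteq> 0" using supported_dot_self_eq_0[OF fin, of v] T by simp
  ultimately show "u v = 0" by simp
qed

lemma finite_eigenvalues:
  assumes fin: "finite S" and sym: "symmetric_on S A"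
  shows "finite {\<mu>. is_eigenvalue S A \<mu>}"
proof -
  let ?\<Lambda> = "{\<mu>. is_eigenvalue S A \<mu>}"
  have "\<forall>\<mu>\<in>?\<Lambda>. \<exists>x. x \<in> eigenspace S A \<mu> \<and> x \<noteq> (\<lambda>_. 0)"
    unfolding is_eigenvalue_def by blast
  from bchoice[OF this] obtain v
    where v: "\<And>\<mu>. \<mu> \<in> ?\<Lambda> \<Longrightarrow> v \<mu> \<in> eigenspace S A \<mu> \<and> v \<mu> \<noteq> (\<lambda>_. 0)"
    by blast
  have inj: "inj_on v ?\<Lambda>"
  proof (rule inj_onI)
    fix \<mu> \<nu> assume \<mu>: "\<mu> \<in> ?\<Lambda>" and \<nu>: "\<nu> \<in> ?\<Lambda>" and eq: "v \<mu> = v \<nu>"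
    have x: "v \<mu> \<in> eigenspace S A \<mu>" "v \<mu> \<noteq> (\<lambda>_. 0)" "v \<mu> \<in> eigenspace S A \<nu>"
      using v[OF \<mu>] v[OF \<nu>] unfolding eq by auto
    obtain i where "v \<mu> i \<noteq> 0" using x(2) by (auto simp: fun_eq_iff)
    moreover have "i \<in> S"
      using calculation eigenspace_supported[OF x(1)] unfolding supported_on_def by blast
    then have "\<mu> * v \<mu> i = \<nu> * v \<mu> i" using x(1,3) unfolding eigenspace_def by auto
    ultimately show "\<mu> = \<nu>" by simp
  qed
  have "pairwise (\<lambda>x y. dot S x y = 0) (v ` ?\<Lambda>)"
    unfolding pairwise_def
  proof (intro ballI impI)
    fix x y assume "x \<in> v ` ?\<Lambda>" "y \<in> v ` ?\<Lambda>" "x \<noteq> y"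
    then obtain \<mu> \<nu> where "\<mu> \<in> ?\<Lambda>" "\<nu> \<in> ?\<Lambda>" "x = v \<mu>" "y = v \<nu>" "\<mu> \<noteq> \<nu>" by blast
    then show "dot S x y = 0"
      using v eigenvectors_orthogonal[OF sym, of "v \<mu>" \<mu> "v \<nu>" \<nu>] by simp
  qed
  moreover have vecs: "\<forall>x\<in>v ` ?\<Lambda>. supported_on S x \<and> x \<noteq> (\<lambda>_. 0)"
    using v by (auto intro: eigenspace_supported)
  ultimately have "fun_space.independent (v ` ?\<Lambda>)"
    by (rule independent_if_orthogonal[OF fin, rotated])
  then have "finite (v ` ?\<Lambda>)"
    using vecs by (intro independent_supported_bound(1)[OF fin]) auto
  then show ?thesis using inj by (rule finite_imageD)
qed

lemma Min_eigenvalue: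
  assumes fin: "finite S" and ne: "S \<noteq> {}" and sym: "symmetric_on S A"
  shows "is_eigenvalue S A (Min {\<mu>. is_eigenvalue S A \<mu>})"
    and "rayleigh_lower_bound S A (Min {\<mu>. is_eigenvalue S A \<mu>})"
proof -
  obtain \<mu> x where x: "x \<in> eigenspace S A \<mu>" "x \<noteq> (\<lambda>_. 0)"
    and bound: "rayleigh_lower_bound S A \<mu>"
    using exists_rayleigh_minimizer[OF assms] .
  have "Min {\<mu>. is_eigenvalue S A \<mu>} = \<mu>"
  proof (rule Min_eqI[OF finite_eigenvalues[OF fin sym]])
    show "\<mu> \<in> {\<mu>. is_eigenvalue S A \<mu>}" using x unfolding is_eigenvalue_def by blast
  next
    fix \<nu> assume "\<nu> \<in> {\<mu>. is_eigenvalue S A \<mu>}"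
    then obtain y where y: "y \<in> eigenspace S A \<nu>" "y \<noteq> (\<lambda>_. 0)"
      unfolding is_eigenvalue_def by blast
    have "\<mu> * dot S y y \<le> bilinear_form S A y y"
      using bound eigenspace_supported[OF y(1)] unfolding rayleigh_lower_bound_def by blast
    also have "\<dots> = \<nu> * dot S y y" by (rule bilinear_form_eigenvector[OF y(1)])
    finally have "\<mu> * dot S y y \<le> \<nu> * dot S y y" .
    moreover have "0 < dot S y y"
      using supported_dot_self_eq_0[OF fin eigenspace_supported[OF y(1)]] y(2)
        dot_self_nonneg[of S y] by linarith
    ultimately show "\<mu> \<le> \<nu>" by simp
  qed
  then show "is_eigenvalue S A (Min {\<mu>. is_eigenvalue S A \<mu>})"
    and "rayleigh_lower_bound S A (Min {\<mu>. is_eigenvalue S A \<mu>})"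
    using x bound unfolding is_eigenvalue_def by auto
qed

lemma eigenspace_basis:
  assumes "finite S"
  obtains B where "B \<subseteq> eigenspace S A \<mu>" "fun_space.independent B"
    "eigenspace S A \<mu> \<subseteq> fun_space.span B" "finite B" "card B = eig_mult S A \<mu>"
proof -
  obtain B where B: "B \<subseteq> eigenspace S A \<mu>" "fun_space.independent B"
    "eigenspace S A \<mu> \<subseteq> fun_space.span B" "card B = eig_mult S A \<mu>"
    unfolding eig_mult_def using fun_space.basis_exists by blast
  moreover have "finite B"
    using B(1) by (intro independent_supported_bound(1)[OF assms B(2)])
      (auto intro: eigenspace_supported)
  ultimately show thesis using that by blast
qed

lemma card_le_eig_mult:
  assumes "finite S" "Y \<subseteq> eigenspace S A \<mu>" "fun_space.independent Y"
  shows "card Y \<le> eig_mult S A \<mu>"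
proof -
  obtain B where B: "eigenspace S A \<mu> \<subseteq> fun_space.span B" "finite B" "card B = eig_mult S A \<mu>"
    using eigenspace_basis[OF assms(1)] by metis
  have "Y \<subseteq> fun_space.span B" using assms(2) B(1) by (rule order_trans)
  then have "card Y \<le> card B"
    using fun_space.independent_span_bound[OF B(2) assms(3)] by simp
  then show ?thesis using B(3) by simp
qed

lemma eig_mult_le_if_inj_linear:
  fixes f :: "('a \<Rightarrow> real) \<Rightarrow> ('b \<Rightarrow> real)"
  assumes fin: "finite S" "finite S'"
    and lin: "Vector_Spaces.linear (\<lambda>r x i. r * x i) (\<lambda>r x i. r * x i) f"
    and maps: "f ` eigenspace S A \<mu> \<subseteq> eigenspace S' B \<nu>"
    and inj: "inj_on f (eigenspace S A \<mu>)"
  shows "eig_mult S A \<mu> \<le> eig_mult S' B \<nu>"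
proof -
  obtain C where C: "C \<subseteq> eigenspace S A \<mu>" "fun_space.independent C"
    "card C = eig_mult S A \<mu>"
    using eigenspace_basis[OF fin(1)] by metis
  have "fun_space.span C \<subseteq> eigenspace S A \<mu>"
    using C(1) subspace_eigenspace by (rule fun_space.span_minimal)
  then have "inj_on f (fun_space.span C)" using inj by (rule inj_on_subset[rotated])
  then have "fun_space.independent (f ` C)"
    by (rule fun_space_pair.linear_independent_injective_image[OF lin C(2)])
  moreover have "f ` C \<subseteq> eigenspace S' B \<nu>" using C(1) maps by (meson image_mono order_trans)
  ultimately have "card (f ` C) \<le> eig_mult S' B \<nu>"
    by (intro card_le_eig_mult[OF fin(2)])
  moreover have "card (f ` C) = card C"
    using inj C(1) by (intro card_image) (rule inj_on_subset)
  ultimately show ?thesis using C(3) by simp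
qed

lemma independent_if_biorthogonal:
  fixes y :: "'i \<Rightarrow> 'a \<Rightarrow> real"
  assumes fin: "finite I"
    and dual: "\<And>i j. i \<in> I \<Longrightarrow> j \<in> I \<Longrightarrow> y i (p j) = (if i = j then 1 else 0)"
  shows "fun_space.independent (y ` I)" and "card (y ` I) = card I"
proof -
  have inj: "inj_on y I"
  proof (rule inj_onI)
    fix i j assume "i \<in> I" "j \<in> I" "y i = y j"
    then have "y j (p i) = 1" using dual[of i i] by simp
    then show "i = j" using dual[OF \<open>j \<in> I\<close> \<open>i \<in> I\<close>] by (simp split: if_splits)
  qed
  then show "card (y ` I) = card I" by (rule card_image)
  show "fun_space.independent (y ` I)"
    unfolding fun_space.independent_explicit_finite_subsets
  proof (intro allI impI ballI)
    fix t u v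
    assume t: "t \<subseteq> y ` I" "finite t" and comb: "(\<Sum>w\<in>t. (\<lambda>i. u w * w i)) = 0"
      and v: "v \<in> t"
    obtain j where j: "j \<in> I" "v = y j" using t(1) v by auto
    have "0 = (\<Sum>w\<in>t. u w * w (p j))"
      using fun_cong[OF comb, of "p j"] by (simp add: sum_fun_apply)
    also have "\<dots> = (\<Sum>w\<in>t. if w = v then u w else 0)"
    proof (intro sum.cong refl)
      fix w assume "w \<in> t"
      then obtain i where i: "i \<in> I" "w = y i" using t(1) by auto
      then have "w = v \<longleftrightarrow> i = j" using inj_on_eq_iff[OF inj i(1) j(1)] j(2) by simp
      then show "u w * w (p j) = (if w = v then u w else 0)" using dual i j by auto
    qed
    also have "\<dots> = u v" using t v by (simp add: sum.delta')
    finally show "u v = 0" by simp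
  qed
qed

section \<open>Incidences, degrees and the two Laplacians\<close>

lemma hypergraph_finite_edges: "hypergraph V E \<Longrightarrow> finite E"
  unfolding hypergraph_def by (meson finite_Pow_iff finite_subset)

lemma sum_incidence_edges: "finite E \<Longrightarrow> (\<Sum>e\<in>E. incidence v e) = real (hdeg E v)"
  unfolding incidence_def hdeg_def by (simp add: sum.inter_filter[symmetric])

lemma sum_incidence_vertices:
  assumes "hypergraph V E" "uniform c E" "e \<in> E"
  shows "(\<Sum>v\<in>V. incidence v e) = real c"
proof -
  have "finite V" "e \<subseteq> V" using assms(1,3) unfolding hypergraph_def by auto
  then have "(\<Sum>v\<in>V. incidence v e) = real (card {v \<in> V. v \<in> e})"
    unfolding incidence_def by (simp add: sum.inter_filter[symmetric])
  also have "{v \<in> V. v \<in> e} = e" using \<open>e \<subseteq> V\<close> by auto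
  finally show ?thesis using assms(2,3) unfolding uniform_def by simp
qed

lemma sum_hdeg:
  assumes "hypergraph V E" "uniform c E"
  shows "(\<Sum>v\<in>V. real (hdeg E v)) = real c * real (card E)"
proof -
  have "(\<Sum>v\<in>V. real (hdeg E v)) = (\<Sum>v\<in>V. \<Sum>e\<in>E. incidence v e)"
    using sum_incidence_edges[OF hypergraph_finite_edges[OF assms(1)]] by simp
  also have "\<dots> = (\<Sum>e\<in>E. \<Sum>v\<in>V. incidence v e)" by (rule sum.swap)
  also have "\<dots> = (\<Sum>e\<in>E. real c)" using sum_incidence_vertices[OF assms] by simp
  finally show ?thesis by simp
qed

lemma vertices_nonempty:
  assumes "hypergraph V E" "uniform c E" "c \<ge> 1" "E \<noteq> {}"
  shows "V \<noteq> {}"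
proof -
  obtain e where "e \<in> E" using assms(4) by blast
  then have "e \<noteq> {}" "e \<subseteq> V"
    using assms(1-3) unfolding uniform_def hypergraph_def by auto
  then show ?thesis by blast
qed

lemma c_div_avg_deg:
  assumes hg: "hypergraph V E" and unif: "uniform c E" and "c \<ge> 1" "E \<noteq> {}"
  shows "real c / avg_deg V E = real (card V) / real (card E)"
proof -
  have "card V > 0"
    using vertices_nonempty[OF assms] hg unfolding hypergraph_def by (simp add: card_gt_0_iff)
  moreover have "card E > 0"
    using \<open>E \<noteq> {}\<close> hypergraph_finite_edges[OF hg] by (simp add: card_gt_0_iff)
  ultimately show ?thesis
    using \<open>c \<ge> 1\<close> unfolding avg_deg_def sum_hdeg[OF hg unif] by (simp add: field_simps)
qed

lemma avg_deg_regular: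
  assumes "hypergraph V E" "V \<noteq> {}" "regular V E k"
  shows "avg_deg V E = real k"
  using assms unfolding avg_deg_def regular_def hypergraph_def by simp

lemma symmetric_edge_laplacian: "symmetric_on E (edge_laplacian V E)"
  unfolding symmetric_on_def edge_laplacian_def by (simp add: mult.commute)

lemma bilinear_form_edge_laplacian:
  "bilinear_form E (edge_laplacian V E) x x
     = (\<Sum>v\<in>V. (\<Sum>e\<in>E. incidence v e * x e)\<^sup>2 / real (hdeg E v))"
proof -
  have "bilinear_form E (edge_laplacian V E) x x
     = (\<Sum>e\<in>E. \<Sum>f\<in>E. \<Sum>v\<in>V. (incidence v e * x e) * (incidence v f * x f) / real (hdeg E v))"
    unfolding bilinear_form_def edge_laplacian_def
    by (simp add: sum_distrib_left sum_distrib_right algebra_simps)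
  also have "\<dots> = (\<Sum>e\<in>E. \<Sum>v\<in>V. \<Sum>f\<in>E. (incidence v e * x e) * (incidence v f * x f) / real (hdeg E v))"
    by (intro sum.cong refl) (rule sum.swap)
  also have "\<dots> = (\<Sum>v\<in>V. \<Sum>e\<in>E. \<Sum>f\<in>E. (incidence v e * x e) * (incidence v f * x f) / real (hdeg E v))"
    by (rule sum.swap)
  also have "\<dots> = (\<Sum>v\<in>V. (\<Sum>e\<in>E. incidence v e * x e)\<^sup>2 / real (hdeg E v))"
    by (simp add: power2_eq_square sum_product sum_divide_distrib)
  finally show ?thesis .
qed

definition vertex_lift :: "'v set \<Rightarrow> 'v set set \<Rightarrow> ('v set \<Rightarrow> real) \<Rightarrow> 'v \<Rightarrow> real" where
  "vertex_lift V E y v =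
     (if v \<in> V then (\<Sum>e\<in>E. incidence v e * y e) / real (hdeg E v) else 0)"

lemma incidence_vertex_lift:
  "(\<Sum>v\<in>V. incidence v e * vertex_lift V E y v) = (\<Sum>f\<in>E. edge_laplacian V E e f * y f)"
proof -
  have "(\<Sum>v\<in>V. incidence v e * vertex_lift V E y v)
      = (\<Sum>v\<in>V. \<Sum>f\<in>E. incidence v e * incidence v f / real (hdeg E v) * y f)"
    unfolding vertex_lift_def
    by (intro sum.cong refl) (simp add: sum_distrib_left sum_divide_distrib algebra_simps)
  also have "\<dots> = (\<Sum>f\<in>E. \<Sum>v\<in>V. incidence v e * incidence v f / real (hdeg E v) * y f)"
    by (rule sum.swap)
  finally show ?thesis unfolding edge_laplacian_def by (simp add: sum_distrib_right)
qed

lemma vertex_lift_eigenspace: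
  assumes y: "y \<in> eigenspace E (edge_laplacian V E) \<mu>"
  shows "vertex_lift V E y \<in> eigenspace V (norm_laplacian V E) \<mu>"
  unfolding eigenspace_def
proof (intro CollectI conjI allI impI ballI)
  fix v assume "v \<notin> V"
  then show "vertex_lift V E y v = 0" unfolding vertex_lift_def by simp
next
  fix v assume v: "v \<in> V"
  have "(\<Sum>w\<in>V. norm_laplacian V E v w * vertex_lift V E y w)
      = (\<Sum>w\<in>V. \<Sum>e\<in>E. incidence v e * (incidence w e * vertex_lift V E y w) / real (hdeg E v))"
    unfolding norm_laplacian_def
    by (intro sum.cong refl) (simp add: sum_divide_distrib sum_distrib_right mult.assoc)
  also have "\<dots> = (\<Sum>e\<in>E. \<Sum>w\<in>V. incidence v e * (incidence w e * vertex_lift V E y w) / real (hdeg E v))"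
    by (rule sum.swap)
  also have "\<dots> = (\<Sum>e\<in>E. incidence v e * (\<Sum>f\<in>E. edge_laplacian V E e f * y f) / real (hdeg E v))"
    unfolding incidence_vertex_lift[symmetric] by (simp add: sum_distrib_left sum_divide_distrib)
  also have "\<dots> = (\<Sum>e\<in>E. incidence v e * (\<mu> * y e) / real (hdeg E v))"
    using y unfolding eigenspace_def by (intro sum.cong refl) auto
  also have "\<dots> = \<mu> * vertex_lift V E y v"
    unfolding vertex_lift_def using v by (simp add: sum_distrib_left sum_divide_distrib mult_ac)
  finally show "(\<Sum>w\<in>V. norm_laplacian V E v w * vertex_lift V E y w) = \<mu> * vertex_lift V E y v" .
qed

lemma linear_vertex_lift:
  "Vector_Spaces.linear (\<lambda>r x i. r * x i) (\<lambda>r x i. r * x i) (vertex_lift V E)"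
  unfolding Vector_Spaces.linear_iff
  by (simp add: fun_space.vector_space_axioms vertex_lift_def fun_eq_iff sum.distrib
      sum_distrib_left add_divide_distrib algebra_simps)

lemma inj_on_vertex_lift:
  assumes "\<mu> \<noteq> 0"
  shows "inj_on (vertex_lift V E) (eigenspace E (edge_laplacian V E) \<mu>)"
proof (rule inj_onI)
  fix x y
  assume x: "x \<in> eigenspace E (edge_laplacian V E) \<mu>" and y: "y \<in> eigenspace E (edge_laplacian V E) \<mu>"
    and eq: "vertex_lift V E x = vertex_lift V E y"
  have "\<mu> * x e = \<mu> * y e" if "e \<in> E" for e
  proof -
    have "\<mu> * x e = (\<Sum>f\<in>E. edge_laplacian V E e f * x f)"
      using x that unfolding eigenspace_def by simp
    also have "\<dots> = (\<Sum>v\<in>V. incidence v e * vertex_lift V E y v)"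
      unfolding eq[symmetric] by (rule incidence_vertex_lift[symmetric])
    also have "\<dots> = \<mu> * y e"
      using y that unfolding incidence_vertex_lift eigenspace_def by simp
    finally show ?thesis .
  qed
  moreover have "x e = 0" "y e = 0" if "e \<notin> E" for e
    using x y that unfolding eigenspace_def by auto
  ultimately show "x = y"
    using assms by (metis ext mult_cancel_left)
qed

lemma eig_mult_edge_laplacian_le_norm_laplacian:
  assumes "hypergraph V E" "\<mu> \<noteq> 0"
  shows "eig_mult E (edge_laplacian V E) \<mu> \<le> eig_mult V (norm_laplacian V E) \<mu>"
proof (rule eig_mult_le_if_inj_linear[OF _ _ linear_vertex_lift])
  show "finite E" "finite V"
    using assms(1) hypergraph_finite_edges unfolding hypergraph_def by auto
  show "vertex_lift V E ` eigenspace E (edge_laplacian V E) \<mu> \<subseteq> eigenspace V (norm_laplacian V E) \<mu>"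
    using vertex_lift_eigenspace by blast
  show "inj_on (vertex_lift V E) (eigenspace E (edge_laplacian V E) \<mu>)"
    using assms(2) by (rule inj_on_vertex_lift)
qed

lemma is_eigenvalue_norm_laplacian:
  assumes "is_eigenvalue E (edge_laplacian V E) \<mu>" "\<mu> \<noteq> 0"
  shows "is_eigenvalue V (norm_laplacian V E) \<mu>"
proof -
  obtain y where y: "y \<in> eigenspace E (edge_laplacian V E) \<mu>" "y \<noteq> (\<lambda>_. 0)"
    using assms(1) unfolding is_eigenvalue_def by blast
  have "(\<lambda>_. 0) \<in> eigenspace E (edge_laplacian V E) \<mu>" unfolding eigenspace_def by simp
  moreover have "vertex_lift V E (\<lambda>_. 0) = (\<lambda>_. 0)" by (simp add: vertex_lift_def fun_eq_iff)
  ultimately have "vertex_lift V E y \<noteq> (\<lambda>_. 0)"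
    using inj_on_vertex_lift[OF assms(2)] y unfolding inj_on_def by metis
  then show ?thesis
    using vertex_lift_eigenspace[OF y(1)] unfolding is_eigenvalue_def by blast
qed

section \<open>Strong colourings and their test vectors\<close>

lemma exists_optimal_strong_coloring:
  assumes "finite E"
  obtains col where "proper_strong_coloring E (strong_chromatic_index E) col"
proof -
  obtain h where h: "bij_betw h E {0..<card E}" using ex_bij_betw_finite_nat[OF assms] by blast
  have "proper_strong_coloring E (card E) (\<lambda>e. h e + 1)"
    unfolding proper_strong_coloring_def
  proof (intro conjI ballI impI)
    fix e assume "e \<in> E"
    then have "h e \<in> {0..<card E}" using bij_betwE[OF h] by blast
    then show "h e + 1 \<in> {1..card E}" by simp
  next
    fix e f assume e: "e \<in> E" "f \<in> E" "e \<noteq> f \<and> h e + 1 = h f + 1"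
    then have "e = f" using inj_on_eq_iff[OF bij_betw_imp_inj_on[OF h]] by simp
    with e show "e \<inter> f = {}" by simp
  qed
  then have "\<exists>k col. proper_strong_coloring E k col" by blast
  from LeastI_ex[OF this] show thesis
    using that unfolding strong_chromatic_index_def by blast
qed

locale strong_coloring =
  fixes V :: "'v set" and E :: "'v set set" and c k :: nat and col :: "'v set \<Rightarrow> nat"
  assumes hypergraph: "hypergraph V E" and uniform: "uniform c E" and edges_nonempty: "E \<noteq> {}"
    and no_isolated: "\<forall>v\<in>V. hdeg E v \<ge> 1" and coloring: "proper_strong_coloring E k col"
begin

lemma finite_edges: "finite E"
  using hypergraph by (rule hypergraph_finite_edges)

lemma finite_vertices: "finite V"
  using hypergraph unfolding hypergraph_def by simp

lemma hdeg_pos: "v \<in> V \<Longrightarrow> 0 < real (hdeg E v)"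
  using no_isolated by force

lemma card_edges_pos: "0 < real (card E)"
  using finite_edges edges_nonempty by (simp add: card_gt_0_iff)

lemma color_range: "e \<in> E \<Longrightarrow> col e \<in> {1..k}"
  using coloring unfolding proper_strong_coloring_def by blast

lemma colors_pos: "0 < k"
  using color_range edges_nonempty by fastforce

definition class_size :: "nat \<Rightarrow> real" where
  "class_size i = real (card {e \<in> E. col e = i})"

definition color_deg :: "nat \<Rightarrow> 'v \<Rightarrow> real" where
  "color_deg i v = real (card {e \<in> E. col e = i \<and> v \<in> e})"

definition test_vector :: "nat \<Rightarrow> 'v set \<Rightarrow> real" where
  "test_vector i e =
     (if e \<in> E then (if col e = i then 1 else 0) - class_size i / real (card E) else 0)"

lemma class_size_sum: "class_size i = (\<Sum>e\<in>E. if col e = i then 1 else 0)"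
  unfolding class_size_def using finite_edges by (simp add: sum.inter_filter[symmetric])

lemma color_deg_sum: "color_deg i v = (\<Sum>e\<in>E. if col e = i then incidence v e else 0)"
proof -
  have "color_deg i v = (\<Sum>e\<in>E. if col e = i \<and> v \<in> e then 1 else 0)"
    unfolding color_deg_def using finite_edges by (simp add: sum.inter_filter[symmetric])
  also have "\<dots> = (\<Sum>e\<in>E. if col e = i then incidence v e else 0)"
    by (intro sum.cong refl) (simp add: incidence_def)
  finally show ?thesis .
qed

lemma color_deg_01: "color_deg i v = 0 \<or> color_deg i v = 1"
proof -
  have "card {e \<in> E. col e = i \<and> v \<in> e} \<le> Suc 0"
  proof (subst card_le_Suc0_iff_eq)
    show "finite {e \<in> E. col e = i \<and> v \<in> e}" using finite_edges by simp
    show "\<forall>e\<in>{e \<in> E. col e = i \<and> v \<in> e}. \<forall>f\<in>{e \<in> E. col e = i \<and> v \<in> e}. e = f"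
      using coloring unfolding proper_strong_coloring_def by blast
  qed
  then show ?thesis unfolding color_deg_def by (auto simp: le_Suc_eq)
qed

lemma sum_class_size: "(\<Sum>i\<in>{1..k}. class_size i) = real (card E)"
proof -
  have "(\<Sum>i\<in>{1..k}. class_size i) = (\<Sum>e\<in>E. \<Sum>i\<in>{1..k}. if col e = i then 1 else 0)"
    unfolding class_size_sum by (rule sum.swap)
  also have "\<dots> = (\<Sum>e\<in>E. 1)"
    using color_range by (intro sum.cong refl) simp
  finally show ?thesis by simp
qed

lemma sum_color_deg_colors: "(\<Sum>i\<in>{1..k}. color_deg i v) = real (hdeg E v)"
proof -
  have "(\<Sum>i\<in>{1..k}. color_deg i v) = (\<Sum>e\<in>E. \<Sum>i\<in>{1..k}. if col e = i then incidence v e else 0)"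
    unfolding color_deg_sum by (rule sum.swap)
  also have "\<dots> = (\<Sum>e\<in>E. incidence v e)"
    using color_range by (intro sum.cong refl) simp
  finally show ?thesis using sum_incidence_edges[OF finite_edges] by simp
qed

lemma sum_color_deg_vertices: "(\<Sum>v\<in>V. color_deg i v) = real c * class_size i"
proof -
  have "(\<Sum>v\<in>V. color_deg i v) = (\<Sum>e\<in>E. \<Sum>v\<in>V. if col e = i then incidence v e else 0)"
    unfolding color_deg_sum by (rule sum.swap)
  also have "\<dots> = (\<Sum>e\<in>E. if col e = i then real c else 0)"
  proof (intro sum.cong refl)
    fix e assume "e \<in> E"
    then show "(\<Sum>v\<in>V. if col e = i then incidence v e else 0) = (if col e = i then real c else 0)"
      using sum_incidence_vertices[OF hypergraph uniform] by simp
  qed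
  finally show ?thesis
    unfolding class_size_sum sum_distrib_left by (simp add: if_distrib cong: if_cong)
qed

lemma test_vector_supported: "supported_on E (test_vector i)"
  unfolding supported_on_def test_vector_def by simp

lemma incidence_test_vector:
  "(\<Sum>e\<in>E. incidence v e * test_vector i e)
     = color_deg i v - class_size i / real (card E) * real (hdeg E v)"
proof -
  have "(\<Sum>e\<in>E. incidence v e * test_vector i e)
      = (\<Sum>e\<in>E. (if col e = i then incidence v e else 0)
                 - class_size i / real (card E) * incidence v e)"
    unfolding test_vector_def incidence_def by (intro sum.cong refl) auto
  also have "\<dots> = color_deg i v - class_size i / real (card E) * (\<Sum>e\<in>E. incidence v e)"
    unfolding color_deg_sum by (simp add: sum_subtractf sum_distrib_left)
  finally show ?thesis using sum_incidence_edges[OF finite_edges] by simp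
qed

lemma bilinear_form_test_vector:
  "bilinear_form E (edge_laplacian V E) (test_vector i) (test_vector i)
     = (\<Sum>v\<in>V. color_deg i v / real (hdeg E v)) - real c * (class_size i)\<^sup>2 / real (card E)"
proof -
  define a where "a = class_size i / real (card E)"
  let ?d = "\<lambda>v. real (hdeg E v)"
  have "bilinear_form E (edge_laplacian V E) (test_vector i) (test_vector i)
      = (\<Sum>v\<in>V. (color_deg i v - a * ?d v)\<^sup>2 / ?d v)"
    unfolding bilinear_form_edge_laplacian incidence_test_vector a_def ..
  also have "\<dots> = (\<Sum>v\<in>V. color_deg i v / ?d v - 2 * a * color_deg i v + a\<^sup>2 * ?d v)"
  proof (intro sum.cong refl)
    fix v assume "v \<in> V"
    have "color_deg i v * color_deg i v = color_deg i v" using color_deg_01[of i v] by auto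
    then have "(color_deg i v - a * ?d v)\<^sup>2 = color_deg i v - 2 * a * color_deg i v * ?d v + a\<^sup>2 * ?d v * ?d v"
      by (simp add: power2_eq_square algebra_simps)
    then show "(color_deg i v - a * ?d v)\<^sup>2 / ?d v = color_deg i v / ?d v - 2 * a * color_deg i v + a\<^sup>2 * ?d v"
      using hdeg_pos[OF \<open>v \<in> V\<close>] by (simp add: field_simps)
  qed
  also have "\<dots> = (\<Sum>v\<in>V. color_deg i v / ?d v) - 2 * a * (\<Sum>v\<in>V. color_deg i v) + a\<^sup>2 * (\<Sum>v\<in>V. ?d v)"
    by (simp add: sum.distrib sum_subtractf sum_distrib_left)
  also have "\<dots> = (\<Sum>v\<in>V. color_deg i v / ?d v) - real c * (class_size i)\<^sup>2 / real (card E)"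
    unfolding sum_color_deg_vertices sum_hdeg[OF hypergraph uniform] a_def
    using card_edges_pos by (simp add: power2_eq_square field_simps)
  finally show ?thesis .
qed

lemma dot_test_vector:
  "dot E (test_vector i) (test_vector i) = class_size i - (class_size i)\<^sup>2 / real (card E)"
proof -
  define a where "a = class_size i / real (card E)"
  have "dot E (test_vector i) (test_vector i)
      = (\<Sum>e\<in>E. (if col e = i then 1 else 0) - 2 * a * (if col e = i then 1 else 0) + a\<^sup>2)"
    unfolding dot_def test_vector_def a_def[symmetric]
    by (intro sum.cong refl) (simp add: power2_eq_square algebra_simps)
  also have "\<dots> = class_size i - 2 * a * class_size i + real (card E) * a\<^sup>2"
    unfolding class_size_sum by (simp add: sum.distrib sum_subtractf sum_distrib_left)
  also have "\<dots> = class_size i - (class_size i)\<^sup>2 / real (card E)"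
    unfolding a_def using card_edges_pos by (simp add: power2_eq_square field_simps)
  finally show ?thesis .
qed

lemma sum_bilinear_form_test_vectors:
  "(\<Sum>i\<in>{1..k}. bilinear_form E (edge_laplacian V E) (test_vector i) (test_vector i))
     = real (card V) - real c * (\<Sum>i\<in>{1..k}. (class_size i)\<^sup>2) / real (card E)"
proof -
  have "(\<Sum>i\<in>{1..k}. \<Sum>v\<in>V. color_deg i v / real (hdeg E v))
      = (\<Sum>v\<in>V. (\<Sum>i\<in>{1..k}. color_deg i v) / real (hdeg E v))"
    by (subst sum.swap) (simp add: sum_divide_distrib)
  also have "\<dots> = (\<Sum>v\<in>V. 1)"
  proof (intro sum.cong refl)
    fix v assume "v \<in> V"
    then show "(\<Sum>i\<in>{1..k}. color_deg i v) / real (hdeg E v) = 1"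
      unfolding sum_color_deg_colors using hdeg_pos by simp
  qed
  finally show ?thesis
    unfolding bilinear_form_test_vector sum_subtractf
    by (simp add: sum_divide_distrib[symmetric] sum_distrib_left[symmetric])
qed

lemma sum_dot_test_vectors:
  "(\<Sum>i\<in>{1..k}. dot E (test_vector i) (test_vector i))
     = real (card E) - (\<Sum>i\<in>{1..k}. (class_size i)\<^sup>2) / real (card E)"
  unfolding dot_test_vector sum_subtractf sum_class_size
  by (simp add: sum_divide_distrib[symmetric])

lemma equitable_eigen_if_bound_attained:
  assumes bound: "rayleigh_lower_bound E (edge_laplacian V E) \<mu>"
    and lt: "\<mu> < real (card V) / real (card E)"
    and attained: "real k = (real c - \<mu>) / (real (card V) / real (card E) - \<mu>)"
    and i: "i \<in> {1..k}"
  shows "class_size i = real (card E) / real k"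
    and "test_vector i \<in> eigenspace E (edge_laplacian V E) \<mu>"
proof -
  define M N where "M = real (card E)" and "N = real (card V)"
  define Q where "Q = (\<Sum>j\<in>{1..k}. (class_size j)\<^sup>2)"
  define g where "g j = bilinear_form E (edge_laplacian V E) (test_vector j) (test_vector j)
                         - \<mu> * dot E (test_vector j) (test_vector j)" for j
  define dev where "dev j = (class_size j - M / real k)\<^sup>2" for j
  have M: "0 < M" unfolding M_def by (rule card_edges_pos)
  have k: "0 < real k" using colors_pos by simp
  have g_nonneg: "0 \<le> g j" for j
    using bound test_vector_supported unfolding rayleigh_lower_bound_def g_def by simp
  have dev_nonneg: "0 \<le> dev j" for j unfolding dev_def by simp
  have ck: "real c - \<mu> = real k * (N / M - \<mu>)"
    using attained lt unfolding M_def N_def by (simp add: field_simps)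
  then have "0 < real c - \<mu>" using k lt unfolding M_def N_def by simp
  have N: "N = \<mu> * M + (real c - \<mu>) * M / real k"
    using ck M k by (simp add: field_simps)
  have sum_g: "(\<Sum>j\<in>{1..k}. g j) = N - real c * Q / M - \<mu> * (M - Q / M)"
    unfolding g_def sum_subtractf sum_distrib_left[symmetric] sum_bilinear_form_test_vectors
      sum_dot_test_vectors M_def N_def Q_def ..
  have sum_dev: "(\<Sum>j\<in>{1..k}. dev j) = Q - M\<^sup>2 / real k"
    using sum_squared_deviation[of "{1..k}" class_size] unfolding dev_def Q_def sum_class_size M_def
    by simp
  \<comment> \<open>The Rayleigh defects \<open>g j\<close> and the deviations \<open>dev j\<close> are nonnegative, and attaining
      the bound makes a positive combination of their sums vanish.\<close>
  have "(\<Sum>j\<in>{1..k}. g j) + (real c - \<mu>) / M * (\<Sum>j\<in>{1..k}. dev j) = 0"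
    unfolding sum_g sum_dev N using M k by (simp add: field_simps power2_eq_square)
  moreover have "0 \<le> (\<Sum>j\<in>{1..k}. g j)" "0 \<le> (real c - \<mu>) / M * (\<Sum>j\<in>{1..k}. dev j)"
    using g_nonneg dev_nonneg M \<open>0 < real c - \<mu>\<close> by (simp_all add: sum_nonneg)
  ultimately have "(\<Sum>j\<in>{1..k}. g j) = 0" "(real c - \<mu>) / M * (\<Sum>j\<in>{1..k}. dev j) = 0"
    by linarith+
  then have "(\<Sum>j\<in>{1..k}. g j) = 0" "(\<Sum>j\<in>{1..k}. dev j) = 0"
    using M \<open>0 < real c - \<mu>\<close> by simp_all
  then have "g i = 0" "dev i = 0"
    using g_nonneg dev_nonneg i by (simp_all add: sum_nonneg_eq_0_iff)
  then show "class_size i = real (card E) / real k"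
    and "test_vector i \<in> eigenspace E (edge_laplacian V E) \<mu>"
    using eigenvector_if_rayleigh_equality[OF finite_edges symmetric_edge_laplacian bound
        test_vector_supported]
    unfolding g_def dev_def M_def by simp_all
qed

lemma regular_if_test_vector_in_kernel:
  assumes kernel: "test_vector i \<in> eigenspace E (edge_laplacian V E) 0"
    and size: "class_size i = real (card E) / real k"
  shows "regular V E k"
  unfolding regular_def
proof
  fix v assume v: "v \<in> V"
  let ?f = "\<lambda>w. (\<Sum>e\<in>E. incidence w e * test_vector i e)\<^sup>2 / real (hdeg E w)"
  have "(\<Sum>w\<in>V. ?f w) = 0"
    using bilinear_form_eigenvector[OF kernel, of "test_vector i"]
    unfolding bilinear_form_edge_laplacian by simp
  then have "?f v = 0" using v finite_vertices by (simp add: sum_nonneg_eq_0_iff)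
  then have "color_deg i v = real (hdeg E v) / real k"
    using hdeg_pos[OF v] card_edges_pos colors_pos unfolding incidence_test_vector size by simp
  moreover have "1 \<le> hdeg E v" using no_isolated v by simp
  ultimately show "hdeg E v = k"
    using color_deg_01[of i v] colors_pos by (auto simp: field_simps)
qed

lemma eig_mult_ge_colors_minus_one:
  assumes "\<And>i. i \<in> {1..k} \<Longrightarrow> class_size i = real (card E) / real k
             \<and> test_vector i \<in> eigenspace E (edge_laplacian V E) \<mu>"
  shows "k - 1 \<le> eig_mult E (edge_laplacian V E) \<mu>"
proof -
  have "\<exists>e. e \<in> E \<and> col e = i" if "i \<in> {1..k}" for i
  proof -
    have "0 < class_size i" using assms[OF that] card_edges_pos colors_pos by simp
    then have "{e \<in> E. col e = i} \<noteq> {}" unfolding class_size_def by (intro notI) simp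
    then show ?thesis by blast
  qed
  then obtain p where p: "\<And>i. i \<in> {1..k} \<Longrightarrow> p i \<in> E \<and> col (p i) = i" by metis
  \<comment> \<open>The differences \<open>x\<^sub>i - x\<^sub>k\<close> are biorthogonal to representatives \<open>p j\<close> of the classes.\<close>
  define y where "y i = test_vector i - test_vector k" for i
  have dual: "y i (p j) = (if i = j then 1 else 0)" if "i \<in> {1..<k}" "j \<in> {1..<k}" for i j
    using p[of j] assms[of i] assms[of k] that colors_pos unfolding y_def test_vector_def by auto
  have "y ` {1..<k} \<subseteq> eigenspace E (edge_laplacian V E) \<mu>"
    using assms colors_pos unfolding y_def
    by (auto intro!: fun_space.subspace_diff[OF subspace_eigenspace])
  moreover note biorth = independent_if_biorthogonal[where I = "{1..<k}" and y = y and p = p,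
      OF finite_atLeastLessThan dual]
  ultimately show ?thesis
    using card_le_eig_mult[OF finite_edges _ biorth(1)] biorth(2) by simp
qed

end

theorem mainTheorem16:
  fixes V :: "'v set" and E :: "'v set set" and c :: nat
  assumes hg: "hypergraph V E"
    and c_pos: "c \<ge> 1"
    and unif: "uniform c E"
    and M_pos: "card E \<ge> 1"
    and no_isolated: "\<forall>v\<in>V. hdeg E v \<ge> 1"
    and mu1_lt: "mu1 V E < real c / avg_deg V E"
    and chi_eq: "real (strong_chromatic_index E)
                   = (real c - mu1 V E) / (real c / avg_deg V E - mu1 V E)"
  shows "(mu1 V E = 0 \<longrightarrow>
            (\<exists>k::nat. regular V E k \<and> real k = avg_deg V E
               \<and> strong_chromatic_index E = k
               \<and> is_eigenvalue E (edge_laplacian V E) 0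
               \<and> eig_mult E (edge_laplacian V E) 0 \<ge> k - 1))
       \<and> (mu1 V E > 0 \<longrightarrow>
            is_eigenvalue E (edge_laplacian V E) (mu1 V E)
            \<and> eig_mult E (edge_laplacian V E) (mu1 V E) \<ge> strong_chromatic_index E - 1
            \<and> is_eigenvalue V (norm_laplacian V E) (mu1 V E)
            \<and> eig_mult V (norm_laplacian V E) (mu1 V E) \<ge> strong_chromatic_index E - 1)"
proof -
  let ?L = "edge_laplacian V E" and ?\<mu> = "mu1 V E" and ?\<chi> = "strong_chromatic_index E"
  have fin: "finite E" using hg by (rule hypergraph_finite_edges)
  have ne: "E \<noteq> {}" using M_pos by auto
  obtain col where "proper_strong_coloring E ?\<chi> col"
    using exists_optimal_strong_coloring[OF fin] .
  then interpret strong_coloring V E c ?\<chi> col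
    using hg unif ne no_isolated by unfold_locales
  have eig: "is_eigenvalue E ?L ?\<mu>" and bound: "rayleigh_lower_bound E ?L ?\<mu>"
    using Min_eigenvalue[OF fin ne symmetric_edge_laplacian] unfolding mu1_def by auto
  note avg = c_div_avg_deg[OF hg unif c_pos ne]
  have classes: "class_size i = real (card E) / real ?\<chi> \<and> test_vector i \<in> eigenspace E ?L ?\<mu>"
    if "i \<in> {1..?\<chi>}" for i
    using equitable_eigen_if_bound_attained[OF bound _ _ that] mu1_lt chi_eq unfolding avg by blast
  then have mult: "?\<chi> - 1 \<le> eig_mult E ?L ?\<mu>" by (rule eig_mult_ge_colors_minus_one)
  show ?thesis
  proof (intro conjI impI)
    assume "?\<mu> = 0"
    then have "regular V E ?\<chi>"
      using classes[of 1] colors_pos by (intro regular_if_test_vector_in_kernel) auto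
    moreover have "real ?\<chi> = avg_deg V E"
      using avg_deg_regular[OF hg vertices_nonempty[OF hg unif c_pos ne] calculation] by simp
    ultimately show "\<exists>k. regular V E k \<and> real k = avg_deg V E \<and> ?\<chi> = k
        \<and> is_eigenvalue E ?L 0 \<and> k - 1 \<le> eig_mult E ?L 0"
      using eig mult \<open>?\<mu> = 0\<close> by auto
  next
    assume "?\<mu> > 0"
    then have "?\<mu> \<noteq> 0" by simp
    show "is_eigenvalue E ?L ?\<mu>" "?\<chi> - 1 \<le> eig_mult E ?L ?\<mu>" by (fact eig, fact mult)
    show "is_eigenvalue V (norm_laplacian V E) ?\<mu>"
      using eig \<open>?\<mu> \<noteq> 0\<close> by (rule is_eigenvalue_norm_laplacian)
    show "?\<chi> - 1 \<le> eig_mult V (norm_laplacian V E) ?\<mu>"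
      using mult eig_mult_edge_laplacian_le_norm_laplacian[OF hg \<open>?\<mu> \<noteq> 0\<close>] by (rule order_trans)
  qed
qed

end
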